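(* Let $X_1,\dots,X_n$ ($n\ge 1$) and $Y$ be jointly distributed discrete random variables with $I(\mathbf X;Y)>0$, where $\mathbf X=(X_1,\dots,X_n)$. Let $\Pi:\mathcal A_n\to\mathbb R$ be any partial information decomposition (as defined in the context). Then the average degree of vulnerability satisfies $$\bar v=\frac{\sum_{j=1}^n I(X_j;Y\mid \mathbf X_{-j})}{I(\mathbf X;Y)},$$ where $\mathbf X_{-j}$ denotes the collection of all sources except $X_j$. In particular, $\bar v$ takes the same value for every partial information decomposition $\Pi$ and depends only on Shannon entropies of the joint distribution of $(\mathbf X,Y)$.
   Context: Notation: $[n]=\{1,\dots,n\}$. For $\mathbf a\subseteq[n]$, $X_{\mathbf a}=(X_i)_{i\in\mathbf a}$ (with $X_\emptyset$ a constant), and $\mathbf X_{-j}=X_{[n]\setminus\{j\}}$. Antichains: $\mathcal A_n$ is the set of all nonempty collections $\alpha$ of nonempty subsets of $[n]$ such that no element of $\alpha$ is a proper subset of another element of $\alpha$. Partial information decomposition (PID): any function $\Pi:\mathcal A_n\to\mathbb R$ satisfying the consistency equation: for every nonempty $\mathbf a\subseteq[n]$, $$I(X_{\mathbf a};Y)=\sum_{\alpha\in\mathcal A_n:\ \exists \mathbf b\in\alpha,\ \mathbf b\subseteq \mathbf a}\Pi(\alpha).$$ Degree of vulnerability of $\alpha\in\mathcal A_n$: $v(\alpha)=|\{i\in[n]: i\in\mathbf b \text{ for all } \mathbf b\in\alpha\}|$. Average degree of vulnerability (defined when $I(\mathbf X;Y)>0$): $$\bar v=\sum_{j=0}^n j\sum_{\alpha:\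 v(\alpha)=j}\frac{\Pi(\alpha)}{I(\mathbf X;Y)}.$$ *)

theory Defs
  imports "HOL-Probability.Probability"
begin

definition MI :: "'o pmf \<Rightarrow> ('o \<Rightarrow> 'a) \<Rightarrow> ('o \<Rightarrow> 'b) \<Rightarrow> real" where
  "MI M X Y = prob_space.mutual_information (measure_pmf M) 2
     (count_space (X ` space (measure_pmf M))) (count_space (Y ` space (measure_pmf M))) X Y"

definition CMI :: "'o pmf \<Rightarrow> ('o \<Rightarrow> 'a) \<Rightarrow> ('o \<Rightarrow> 'b) \<Rightarrow> ('o \<Rightarrow> 'c) \<Rightarrow> real" where
  "CMI M X Y Z = prob_space.conditional_mutual_information (measure_pmf M) 2
     (count_space (X ` space (measure_pmf M))) (count_space (Y ` space (measure_pmf M)))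
     (count_space (Z ` space (measure_pmf M))) X Y Z"

text \<open>The sub-vector X_a = (X_i)_{i in a}; X_{} is constant.\<close>
definition Xsub :: "(nat \<Rightarrow> 'o \<Rightarrow> 'v) \<Rightarrow> nat set \<Rightarrow> 'o \<Rightarrow> (nat \<Rightarrow> 'v)" where
  "Xsub X a = (\<lambda>\<omega>. restrict (\<lambda>i. X i \<omega>) a)"

definition antichains :: "nat \<Rightarrow> nat set set set" where
  "antichains n = {\<alpha>. \<alpha> \<noteq> {} \<and> (\<forall>b\<in>\<alpha>. b \<noteq> {} \<and> b \<subseteq> {1..n})
                      \<and> (\<forall>b\<in>\<alpha>. \<forall>c\<in>\<alpha>. \<not> b \<subset> c)}"

definition is_PID :: "'o pmf \<Rightarrow> nat \<Rightarrow> (nat \<Rightarrow> 'o \<Rightarrow> 'v) \<Rightarrow> ('o \<Rightarrow> 'w) \<Rightarrow> (nat set set \<Rightarrow> real) \<Rightarrow> bool" where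
  "is_PID M n X Y P \<longleftrightarrow>
     (\<forall>a. a \<noteq> {} \<and> a \<subseteq> {1..n} \<longrightarrow>
        MI M (Xsub X a) Y = (\<Sum>\<alpha>\<in>{\<alpha>\<in>antichains n. \<exists>b\<in>\<alpha>. b \<subseteq> a}. P \<alpha>))"

definition vuln :: "nat \<Rightarrow> nat set set \<Rightarrow> nat" where
  "vuln n \<alpha> = card {i\<in>{1..n}. \<forall>b\<in>\<alpha>. i \<in> b}"

definition avg_vuln :: "'o pmf \<Rightarrow> nat \<Rightarrow> (nat \<Rightarrow> 'o \<Rightarrow> 'v) \<Rightarrow> ('o \<Rightarrow> 'w) \<Rightarrow> (nat set set \<Rightarrow> real) \<Rightarrow> real" where
  "avg_vuln M n X Y P =
     (\<Sum>j=0..n. real j * (\<Sum>\<alpha>\<in>{\<alpha>\<in>antichains n. vuln n \<alpha> = j}. P \<alpha> / MI M (Xsub X {1..n}) Y))"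

end

theory Submission
  imports Defs
begin

text \<open>The degree of vulnerability of an antichain counts the sources lying in all of its
  members, so swapping the two summations turns the numerator of the average into
  \<open>\<Sum>\<^sub>j \<Sum>{\<Pi>(\<alpha>) | j \<in> \<Inter>\<alpha>}\<close>. An antichain fails to have \<open>j\<close> in all its members exactly
  when one of its members lies in \<open>[n] - {j}\<close>, so by the consistency equation for
  \<open>[n]\<close> and for \<open>[n] - {j}\<close> the inner sum is \<open>I(X;Y) - I(X\<^sub>-\<^sub>j;Y)\<close>, which by the chain
  rule for mutual information is \<open>I(X\<^sub>j;Y | X\<^sub>-\<^sub>j)\<close>.\<close>

context information_space
begin

lemma mutual_information_count_space_superset:
  assumes X: "simple_function M X" and Y: "simple_function M Y"
    and A: "Y`space M \<subseteq> A" "finite A"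
  shows "mutual_information b (count_space (X`space M)) (count_space A) X Y = \<I>(X;Y)"
proof -
  define Px where "Px x = prob (X-`{x} \<inter> space M)" for x
  define Py where "Py y = prob (Y-`{y} \<inter> space M)" for y
  define Pxy where "Pxy z = prob ((\<lambda>x. (X x, Y x))-`{z} \<inter> space M)" for z
  have XY: "simple_function M (\<lambda>x. (X x, Y x))" using X Y by (rule simple_function_Pair)
  have sX: "simple_distributed M X Px" unfolding Px_def
    using X by (rule simple_distributedI) (auto simp: measure_nonneg)
  have sY: "simple_distributed M Y Py" unfolding Py_def
    using Y by (rule simple_distributedI) (auto simp: measure_nonneg)
  have sXY: "simple_distributed M (\<lambda>x. (X x, Y x)) Pxy" unfolding Pxy_def
    using XY by (rule simple_distributedI) (auto simp: measure_nonneg)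
  have finX: "finite (X`space M)" using X by (rule simple_functionD)
  have finXY: "finite ((\<lambda>x. (X x, Y x))`space M)" using XY by (rule simple_functionD)
  have DX: "distributed M (count_space (X`space M)) X Px" using sX by (rule simple_distributed)
  have DY: "distributed M (count_space A) Y (\<lambda>y. if y \<in> Y`space M then Py y else 0)"
    by (rule distributed_simple_function_superset[OF Y _ A]) (simp add: Py_def)
  have PM: "count_space (X`space M) \<Otimes>\<^sub>M count_space A = count_space (X`space M \<times> A)"
    using finX A by (simp add: pair_measure_count_space)
  have DXY: "distributed M (count_space (X`space M) \<Otimes>\<^sub>M count_space A) (\<lambda>x. (X x, Y x))
      (\<lambda>z. if z \<in> (\<lambda>x. (X x, Y x))`space M then Pxy z else 0)"
    unfolding PM
    by (rule distributed_simple_function_superset[OF XY]) (use A finX in \<open>auto simp: Pxy_def\<close>)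
  have "mutual_information b (count_space (X`space M)) (count_space A) X Y =
    integral\<^sup>L (count_space (X`space M) \<Otimes>\<^sub>M count_space A)
      (\<lambda>z. (if z \<in> (\<lambda>x. (X x, Y x))`space M then Pxy z else 0) *
        log b ((if z \<in> (\<lambda>x. (X x, Y x))`space M then Pxy z else 0) /
          (Px (fst z) * (if snd z \<in> Y`space M then Py (snd z) else 0))))"
    by (rule mutual_information_distr[OF _ _ DX _ DY _ DXY])
       (auto simp: sigma_finite_measure_count_space_finite finX A Px_def Py_def Pxy_def measure_nonneg)
  also have "\<dots> = (\<Sum>z\<in>X`space M \<times> A.
      (if z \<in> (\<lambda>x. (X x, Y x))`space M then Pxy z else 0) *
        log b ((if z \<in> (\<lambda>x. (X x, Y x))`space M then Pxy z else 0) /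
          (Px (fst z) * (if snd z \<in> Y`space M then Py (snd z) else 0))))"
    unfolding PM using finX A by (simp add: lebesgue_integral_count_space_finite)
  also have "\<dots> = (\<Sum>z\<in>(\<lambda>x. (X x, Y x))`space M. Pxy z * log b (Pxy z / (Px (fst z) * Py (snd z))))"
    by (rule sum.mono_neutral_cong_right) (use finX A finXY in auto)
  also have "\<dots> = \<I>(X;Y)"
    by (subst mutual_information_simple_distributed[OF sX sY sXY]) (simp add: split_beta')
  finally show ?thesis .
qed

lemma entropy_pair_commute:
  assumes "simple_function M X" and "simple_function M Y"
  shows "\<H>(\<lambda>x. (X x, Y x)) = \<H>(\<lambda>x. (Y x, X x))"
proof -
  have "\<H>(\<lambda>x. (X x, Y x)) = \<H>((\<lambda>(a, b). (b, a)) \<circ> (\<lambda>x. (Y x, X x)))"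
    by (simp add: comp_def)
  also have "\<dots> = \<H>(\<lambda>x. (Y x, X x))"
    using assms by (intro entropy_of_inj simple_function_Pair) (auto simp: inj_on_def)
  finally show ?thesis .
qed

lemma entropy_pair_measure_count_space:
  assumes X: "simple_function M X" and Y: "simple_function M Y"
  shows "entropy b (count_space (X`space M) \<Otimes>\<^sub>M count_space (Y`space M)) (\<lambda>x. (X x, Y x))
     = \<H>(\<lambda>x. (X x, Y x))"
  using entropy_chain_rule[OF Y X] conditional_entropy_eq_entropy_simple[OF X Y]
    entropy_pair_commute[OF X Y] by simp

lemma mutual_information_eq_entropy_simple:
  assumes X: "simple_function M X" and Y: "simple_function M Y"
  shows "\<I>(X;Y) = \<H>(X) + \<H>(Y) - \<H>(\<lambda>x. (X x, Y x))"
  using mutual_information_eq_entropy_conditional_entropy[OF X Y]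
    conditional_entropy_eq_entropy_simple[OF X Y] entropy_pair_measure_count_space[OF X Y]
  by simp

lemma conditional_mutual_information_eq_entropy_simple:
  assumes X: "simple_function M X" and Y: "simple_function M Y" and Z: "simple_function M Z"
  shows "\<I>(X;Y|Z) =
    \<H>(\<lambda>x. (X x, Z x)) + \<H>(\<lambda>x. (Y x, Z x)) - \<H>(\<lambda>x. (X x, Y x, Z x)) - \<H>(Z)"
proof -
  have YZ: "simple_function M (\<lambda>x. (Y x, Z x))" using Y Z by (rule simple_function_Pair)
  have fin: "finite (Y`space M)" "finite (Z`space M)" using Y Z by (auto intro: simple_functionD)
  then have PM: "count_space (Y`space M) \<Otimes>\<^sub>M count_space (Z`space M)
      = count_space (Y`space M \<times> Z`space M)"
    by (simp add: pair_measure_count_space)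
  have "mutual_information b (count_space (X`space M))
      (count_space (Y`space M) \<Otimes>\<^sub>M count_space (Z`space M)) X (\<lambda>x. (Y x, Z x))
     = \<I>(X; \<lambda>x. (Y x, Z x))"
    unfolding PM by (rule mutual_information_count_space_superset[OF X YZ]) (auto simp: fin)
  then show ?thesis
    unfolding conditional_mutual_information_def
    using mutual_information_eq_entropy_simple[OF X YZ] mutual_information_eq_entropy_simple[OF X Z]
    by simp
qed

lemma mutual_information_inj_left:
  assumes X: "simple_function M X" and Y: "simple_function M Y" and f: "inj_on f (X`space M)"
  shows "\<I>(\<lambda>x. f (X x); Y) = \<I>(X; Y)"
proof -
  have fX: "simple_function M (\<lambda>x. f (X x))" using X by (rule simple_function_compose1)
  have "\<H>(\<lambda>x. f (X x)) = \<H>(X)"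
    using entropy_of_inj[OF X f] by (simp add: comp_def)
  moreover have "\<H>(\<lambda>x. (f (X x), Y x)) = \<H>(\<lambda>x. (X x, Y x))"
    using entropy_of_inj[OF simple_function_Pair[OF X Y], of "\<lambda>(a, c). (f a, c)"] f
    by (auto simp: comp_def inj_on_def)
  ultimately show ?thesis
    by (simp add: mutual_information_eq_entropy_simple[OF fX Y] mutual_information_eq_entropy_simple[OF X Y])
qed

lemma mutual_information_chain_rule_simple:
  assumes X: "simple_function M X" and Y: "simple_function M Y" and Z: "simple_function M Z"
  shows "\<I>(\<lambda>x. (X x, Z x); Y) = \<I>(Z; Y) + \<I>(X; Y | Z)"
proof -
  have "\<H>(\<lambda>x. ((X x, Z x), Y x)) = \<H>((\<lambda>(a, c, d). ((a, d), c)) \<circ> (\<lambda>x. (X x, Y x, Z x)))"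
    by (simp add: comp_def)
  also have "\<dots> = \<H>(\<lambda>x. (X x, Y x, Z x))"
    using assms by (intro entropy_of_inj simple_function_Pair) (auto simp: inj_on_def)
  finally show ?thesis
    using assms
    by (simp add: mutual_information_eq_entropy_simple conditional_mutual_information_eq_entropy_simple
        entropy_pair_commute[of Y Z] simple_function_Pair)
qed

lemma mutual_information_const:
  assumes Y: "simple_function M Y"
  shows "\<I>(\<lambda>_. c; Y) = 0"
proof -
  have "\<H>(\<lambda>x. (c, Y x)) = \<H>(Pair c \<circ> Y)" by (simp add: comp_def)
  also have "\<dots> = \<H>(Y)" using Y by (rule entropy_of_inj) (auto simp: inj_on_def)
  finally have "\<H>(\<lambda>x. (c, Y x)) = \<H>(Y)" .
  moreover have "\<H>(\<lambda>_. c) = 0"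
  proof -
    have sd: "simple_distributed M (\<lambda>_. c) (\<lambda>_. 1)"
      by (rule simple_distributedI) (auto simp: prob_space)
    have "(\<lambda>_. c) ` space M = {c}" using not_empty by auto
    then show ?thesis by (subst entropy_simple_distributed[OF sd]) simp
  qed
  ultimately show ?thesis using Y by (simp add: mutual_information_eq_entropy_simple)
qed

end

lemma simple_function_measure_pmf_finite:
  "simple_function (measure_pmf (M :: 'o::finite pmf)) f"
  by (simp add: simple_function_def)

lemma MI_Xsub_empty:
  fixes M :: "'o::finite pmf"
  shows "MI M (Xsub X {}) Y = 0"
proof -
  interpret information_space "measure_pmf M" 2 by standard simp
  have "Xsub X {} = (\<lambda>_ _. undefined)" by (simp add: Xsub_def fun_eq_iff)
  then show ?thesis
    unfolding MI_def using mutual_information_const[OF simple_function_measure_pmf_finite] by simp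
qed

lemma inj_on_extensional_split:
  assumes "j \<in> a"
  shows "inj_on (\<lambda>f. (f j, restrict f (a - {j}))) (extensional a)"
proof (rule inj_onI)
  fix f g assume f: "f \<in> extensional a" and g: "g \<in> extensional a"
    and eq: "(f j, restrict f (a - {j})) = (g j, restrict g (a - {j}))"
  show "f = g"
  proof (rule extensionalityI[OF f g])
    fix i assume "i \<in> a"
    with eq show "f i = g i" by (cases "i = j") (auto dest: fun_cong[where x = i])
  qed
qed

lemma CMI_Xsub_remove:
  fixes M :: "'o::finite pmf" and X :: "nat \<Rightarrow> 'o \<Rightarrow> 'v" and Y :: "'o \<Rightarrow> 'w"
  assumes j: "j \<in> a"
  shows "CMI M (X j) Y (Xsub X (a - {j})) = MI M (Xsub X a) Y - MI M (Xsub X (a - {j})) Y"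
proof -
  interpret information_space "measure_pmf M" 2 by standard simp
  note sf = simple_function_measure_pmf_finite
  have split: "(\<lambda>\<omega>. (X j \<omega>, Xsub X (a - {j}) \<omega>))
      = (\<lambda>\<omega>. (\<lambda>f. (f j, restrict f (a - {j}))) (Xsub X a \<omega>))"
    using j by (auto simp: Xsub_def fun_eq_iff)
  have "range (Xsub X a) \<subseteq> extensional a" by (auto simp: Xsub_def)
  then have "MI M (\<lambda>\<omega>. (X j \<omega>, Xsub X (a - {j}) \<omega>)) Y = MI M (Xsub X a) Y"
    unfolding MI_def split
    by (intro mutual_information_inj_left[OF sf sf] inj_on_subset[OF inj_on_extensional_split[OF j]])
       simp
  then show ?thesis
    unfolding MI_def CMI_def
    using mutual_information_chain_rule_simple[OF sf sf sf,
        where X = "X j" and Y = Y and Z = "Xsub X (a - {j})"]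
    by linarith
qed

lemma finite_antichains: "finite (antichains n)"
  by (rule finite_subset[of _ "Pow (Pow {1..n})"]) (auto simp: antichains_def)

lemma vuln_le: "vuln n \<alpha> \<le> n"
proof -
  have "vuln n \<alpha> \<le> card {1..n}" unfolding vuln_def by (rule card_mono) auto
  then show ?thesis by simp
qed

lemma avg_vuln_eq_sum:
  "avg_vuln M n X Y P = (\<Sum>\<alpha>\<in>antichains n. real (vuln n \<alpha>) * P \<alpha>) / MI M (Xsub X {1..n}) Y"
proof -
  have "avg_vuln M n X Y P
      = (\<Sum>j=0..n. \<Sum>\<alpha>\<in>{\<alpha>\<in>antichains n. vuln n \<alpha> = j}. real (vuln n \<alpha>) * P \<alpha>) / MI M (Xsub X {1..n}) Y"
    unfolding avg_vuln_def sum_divide_distrib sum_distrib_left by (intro sum.cong refl) auto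
  also have "(\<Sum>j=0..n. \<Sum>\<alpha>\<in>{\<alpha>\<in>antichains n. vuln n \<alpha> = j}. real (vuln n \<alpha>) * P \<alpha>)
      = (\<Sum>\<alpha>\<in>antichains n. real (vuln n \<alpha>) * P \<alpha>)"
    by (rule sum.group) (auto simp: finite_antichains vuln_le)
  finally show ?thesis .
qed

lemma sum_vuln_mult_eq:
  "(\<Sum>\<alpha>\<in>antichains n. real (vuln n \<alpha>) * P \<alpha>)
     = (\<Sum>i=1..n. \<Sum>\<alpha>\<in>{\<alpha>\<in>antichains n. \<forall>b\<in>\<alpha>. i \<in> b}. P \<alpha>)"
proof -
  have "real (vuln n \<alpha>) * P \<alpha> = (\<Sum>i=1..n. if \<forall>b\<in>\<alpha>. i \<in> b then P \<alpha> else 0)" for \<alpha>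
    by (simp add: vuln_def sum.inter_filter[symmetric])
  then have "(\<Sum>\<alpha>\<in>antichains n. real (vuln n \<alpha>) * P \<alpha>)
      = (\<Sum>i=1..n. \<Sum>\<alpha>\<in>antichains n. if \<forall>b\<in>\<alpha>. i \<in> b then P \<alpha> else 0)"
    by (simp add: sum.swap[of _ "antichains n"])
  then show ?thesis by (simp add: sum.inter_filter finite_antichains)
qed

lemma antichains_not_all_contain:
  "{\<alpha>\<in>antichains n. \<not> (\<forall>b\<in>\<alpha>. i \<in> b)} = {\<alpha>\<in>antichains n. \<exists>b\<in>\<alpha>. b \<subseteq> {1..n} - {i}}"
  by (auto simp: antichains_def)

lemma is_PID_MI_Xsub:
  fixes M :: "'o::finite pmf"
  assumes "is_PID M n X Y P" and "a \<subseteq> {1..n}"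
  shows "MI M (Xsub X a) Y = (\<Sum>\<alpha>\<in>{\<alpha>\<in>antichains n. \<exists>b\<in>\<alpha>. b \<subseteq> a}. P \<alpha>)"
proof (cases "a = {}")
  case True
  have "{\<alpha>\<in>antichains n. \<exists>b\<in>\<alpha>. b \<subseteq> {}} = {}" by (auto simp: antichains_def)
  then show ?thesis unfolding True by (simp only: MI_Xsub_empty sum.empty)
next
  case False
  with assms show ?thesis unfolding is_PID_def by blast
qed

lemma is_PID_sum_all_contain_eq_CMI:
  fixes M :: "'o::finite pmf"
  assumes PID: "is_PID M n X Y P" and i: "i \<in> {1..n}"
  shows "(\<Sum>\<alpha>\<in>{\<alpha>\<in>antichains n. \<forall>b\<in>\<alpha>. i \<in> b}. P \<alpha>) = CMI M (X i) Y (Xsub X ({1..n} - {i}))"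
proof -
  have "{\<alpha>\<in>antichains n. \<exists>b\<in>\<alpha>. b \<subseteq> {1..n}} = antichains n" by (auto simp: antichains_def)
  then have "MI M (Xsub X {1..n}) Y = sum P (antichains n)"
    using is_PID_MI_Xsub[OF PID, of "{1..n}"] by simp
  also have "\<dots> = (\<Sum>\<alpha>\<in>{\<alpha>\<in>antichains n. \<forall>b\<in>\<alpha>. i \<in> b}. P \<alpha>)
      + (\<Sum>\<alpha>\<in>{\<alpha>\<in>antichains n. \<not> (\<forall>b\<in>\<alpha>. i \<in> b)}. P \<alpha>)"
    by (rule sum.Int_Diff[OF finite_antichains, where B = "{\<alpha>. \<forall>b\<in>\<alpha>. i \<in> b}",
          unfolded Int_def set_diff_eq mem_Collect_eq])
  also have "(\<Sum>\<alpha>\<in>{\<alpha>\<in>antichains n. \<not> (\<forall>b\<in>\<alpha>. i \<in> b)}. P \<alpha>) = MI M (Xsub X ({1..n} - {i})) Y"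
    unfolding antichains_not_all_contain using is_PID_MI_Xsub[OF PID] by auto
  finally show ?thesis using CMI_Xsub_remove[OF i, of M X Y] by simp
qed

theorem proposition2:
  fixes M :: "'o::finite pmf" and n :: nat
    and X :: "nat \<Rightarrow> 'o \<Rightarrow> 'v" and Y :: "'o \<Rightarrow> 'w"
    and P :: "nat set set \<Rightarrow> real"
  assumes "n \<ge> 1"
    and "MI M (Xsub X {1..n}) Y > 0"
    and "is_PID M n X Y P"
  shows "avg_vuln M n X Y P =
     (\<Sum>j=1..n. CMI M (X j) Y (Xsub X ({1..n} - {j}))) / MI M (Xsub X {1..n}) Y"
proof -
  have "avg_vuln M n X Y P
      = (\<Sum>j=1..n. \<Sum>\<alpha>\<in>{\<alpha>\<in>antichains n. \<forall>b\<in>\<alpha>. j \<in> b}. P \<alpha>) / MI M (Xsub X {1..n}) Y"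
    by (simp only: avg_vuln_eq_sum sum_vuln_mult_eq)
  also have "\<dots> = (\<Sum>j=1..n. CMI M (X j) Y (Xsub X ({1..n} - {j}))) / MI M (Xsub X {1..n}) Y"
    using is_PID_sum_all_contain_eq_CMI[OF assms(3)] by simp
  finally show ?thesis .
qed

end
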